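(* Let $l_2$ be an odd integer with $l_2\ge 3$ and let $G=\Theta(2,l_2,2)$. Then $P_\ell(G,3)=P(G,3)$.
   Context: For positive integers $l_1,l_2,l_3$, the theta graph $\Theta(l_1,l_2,l_3)$ consists of two end vertices joined by three internally disjoint paths of lengths (numbers of edges) $l_1,l_2,l_3$. A $3$-assignment $L$ for $G$ assigns to each vertex $v$ a set $L(v)$ of $3$ colors; $P(G,L)$ is the number of proper colorings $f$ of $G$ with $f(v)\in L(v)$ for all $v$. $P(G,3)$ is the number of proper colorings of $G$ with colors from $\{1,2,3\}$, and $P_\ell(G,3)$ is the minimum of $P(G,L)$ over all $3$-assignments $L$ for $G$. *)

theory Defs
  imports "HOL-Library.FuncSet"
begin

text \<open>Graphs are given by a vertex set V and a set E of edges, each edge a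
two-element set of vertices. Colours are natural numbers.\<close>

definition proper :: "'v set set \<Rightarrow> ('v \<Rightarrow> nat) \<Rightarrow> bool" where
  "proper E f \<longleftrightarrow> (\<forall>e\<in>E. \<forall>x\<in>e. \<forall>y\<in>e. x \<noteq> y \<longrightarrow> f x \<noteq> f y)"

definition P_list :: "'v set \<Rightarrow> 'v set set \<Rightarrow> ('v \<Rightarrow> nat set) \<Rightarrow> nat" where
  "P_list V E L = card {f \<in> Pi\<^sub>E V L. proper E f}"

definition P_chrom3 :: "'v set \<Rightarrow> 'v set set \<Rightarrow> nat" where
  "P_chrom3 V E = P_list V E (\<lambda>_. {1,2,3})"

definition three_assignment :: "'v set \<Rightarrow> ('v \<Rightarrow> nat set) \<Rightarrow> bool" where
  "three_assignment V L \<longleftrightarrow> (\<forall>v\<in>V. card (L v) = 3)"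

definition P_list3 :: "'v set \<Rightarrow> 'v set set \<Rightarrow> nat" where
  "P_list3 V E = Inf {P_list V E L | L. three_assignment V L}"

text \<open>Theta graph Theta(l1,l2,l3): end vertices End0, End1; path i (i = 1,2,3)
has internal vertices Inner i j for 1 \<le> j < l_i.\<close>
datatype theta_vertex = End0 | End1 | Inner nat nat

definition theta_len :: "nat \<Rightarrow> nat \<Rightarrow> nat \<Rightarrow> nat \<Rightarrow> nat" where
  "theta_len l1 l2 l3 i = (if i = 1 then l1 else if i = 2 then l2 else l3)"

definition theta_pv :: "nat \<Rightarrow> nat \<Rightarrow> nat \<Rightarrow> nat \<Rightarrow> nat \<Rightarrow> theta_vertex" where
  "theta_pv l1 l2 l3 i j =
     (if j = 0 then End0 else if j = theta_len l1 l2 l3 i then End1 else Inner i j)"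

definition theta_V :: "nat \<Rightarrow> nat \<Rightarrow> nat \<Rightarrow> theta_vertex set" where
  "theta_V l1 l2 l3 = {End0, End1} \<union>
     {Inner i j | i j. i \<in> {1,2,3} \<and> 1 \<le> j \<and> j < theta_len l1 l2 l3 i}"

definition theta_E :: "nat \<Rightarrow> nat \<Rightarrow> nat \<Rightarrow> theta_vertex set set" where
  "theta_E l1 l2 l3 =
     {{theta_pv l1 l2 l3 i j, theta_pv l1 l2 l3 i (Suc j)} | i j.
        i \<in> {1,2,3} \<and> j < theta_len l1 l2 l3 i}"

end

(* Write u, w for the end vertices, a, b for the middle vertices of the two paths of length 2,
   and k = l2 - 1 (even) for the number of inner vertices of the long path. Fixing the colours
   c of u and d of w,
     P(G,L) = sum over c in L(u), d in L(w) of |L(a) - {c,d}| * |L(b) - {c,d}| * N(c,d),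
   where N(c,d) counts the L-colourings of the inner vertices of the long path. Peeling off one
   inner vertex at a time shows, for 3-lists, N(c,d) >= m_k for all c and
   N(c,d) + N(c',d) >= 2 m_k + 1 whenever c <> c', where m_k = min_path_count k; for the
   lists {1,2,3} one has N(c,d) = m_k + [c <> d]. The weights |L(a) - {c,d}| * |L(b) - {c,d}|
   count the L-colourings of the 4-cycle u a w b, so they sum to at least 18 = P(C4,3), and the
   excess of N over m_k contributes at least 2 for each d. Hence P(G,L) >= 18 m_k + 6 = P(G,3). *)

theory Submission
  imports Defs
begin

definition path_colourings :: "nat \<Rightarrow> nat set list \<Rightarrow> nat \<Rightarrow> nat list set" where
  "path_colourings c Ls d = {xs. list_all2 (\<in>) xs Ls \<and> successively (\<noteq>) (c # xs @ [d])}"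

lemma path_colourings_Nil: "path_colourings c [] d = (if c = d then {} else {[]})"
  by (auto simp: path_colourings_def)

lemma path_colourings_Cons:
  "path_colourings c (L # Ls) d = (\<Union>z\<in>L - {c}. (#) z ` path_colourings z Ls d)"
  by (auto simp: path_colourings_def list_all2_Cons2)

lemma length_path_colourings: "xs \<in> path_colourings c Ls d \<Longrightarrow> length xs = length Ls"
  by (auto simp: path_colourings_def dest: list_all2_lengthD)

lemma finite_path_colourings:
  assumes "\<forall>L\<in>set Ls. finite L"
  shows "finite (path_colourings c Ls d)"
  using assms by (induction Ls arbitrary: c) (auto simp: path_colourings_Nil path_colourings_Cons)

lemma card_path_colourings_Cons:
  assumes "\<forall>L\<in>set (L # Ls). finite L"
  shows "card (path_colourings c (L # Ls) d) = (\<Sum>z\<in>L - {c}. card (path_colourings z Ls d))"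
proof -
  have fin: "\<And>z. finite (path_colourings z Ls d)"
    using assms by (simp add: finite_path_colourings)
  have "card (path_colourings c (L # Ls) d) = (\<Sum>z\<in>L - {c}. card ((#) z ` path_colourings z Ls d))"
    unfolding path_colourings_Cons by (rule card_UN_disjoint) (use assms fin in auto)
  also have "\<dots> = (\<Sum>z\<in>L - {c}. card (path_colourings z Ls d))"
    by (simp add: card_image)
  finally show ?thesis .
qed

fun min_path_count :: "nat \<Rightarrow> nat" where
  "min_path_count 0 = 0"
| "min_path_count (Suc k) = 2 * min_path_count k + (if even k then 1 else 0)"

lemma sum_Diff_singleton_ge_pair:
  fixes g :: "'a \<Rightarrow> nat"
  assumes "card L = 3"
  obtains z z' where "z \<noteq> z'" "g z + g z' \<le> sum g (L - {c})"
proof -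
  obtain p q r where L: "L = {p, q, r}" "p \<noteq> q" "q \<noteq> r" "p \<noteq> r"
    using assms by (auto simp: card_3_iff)
  obtain z z' where zz': "z \<in> L - {c}" "z' \<in> L - {c}" "z \<noteq> z'"
    using L by (cases "c = p"; cases "c = q") blast+
  have "g z + g z' = sum g {z, z'}"
    using zz' by simp
  also have "\<dots> \<le> sum g (L - {c})"
    using zz' L by (intro sum_mono2) auto
  finally show ?thesis
    using zz' that by blast
qed

lemma sum_Int_singletons_le:
  fixes g :: "'a \<Rightarrow> nat"
  assumes "finite L" "c \<noteq> c'" "c' \<noteq> c''" "c \<noteq> c''"
  shows "sum g (L \<inter> {c}) + sum g (L \<inter> {c'}) + sum g (L \<inter> {c''}) \<le> sum g L"
proof -
  have "sum g (L \<inter> {c}) + sum g (L \<inter> {c'}) + sum g (L \<inter> {c''}) = sum g (L \<inter> {c, c', c''})"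
    using assms by (simp add: Int_insert_right)
  also have "\<dots> \<le> sum g L"
    using assms(1) by (intro sum_mono2) auto
  finally show ?thesis .
qed

text \<open>The two parity cases of the induction step for card_path_colourings_lower_bounds, where g is
  the count for the path with one inner vertex less.\<close>

lemma sum_Diff_singleton_bounds_of_pairs:
  fixes g :: "'a \<Rightarrow> nat"
  assumes L: "card L = 3" and pair: "\<And>c c'. c \<noteq> c' \<Longrightarrow> 2 * m + 1 \<le> g c + g c'"
  shows "2 * m + 1 \<le> sum g (L - {c})"
    and "c \<noteq> c' \<Longrightarrow> c' \<noteq> c'' \<Longrightarrow> c \<noteq> c'' \<Longrightarrow>
      3 * (2 * m + 1) + 1 \<le> sum g (L - {c}) + sum g (L - {c'}) + sum g (L - {c''})"
proof -
  show "2 * m + 1 \<le> sum g (L - {c})"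
    using sum_Diff_singleton_ge_pair[OF L, of g c] pair by (metis order_trans)
  assume distinct: "c \<noteq> c'" "c' \<noteq> c''" "c \<noteq> c''"
  have fin: "finite L"
    using L by (auto intro: card_ge_0_finite)
  obtain p q r where "L = {p, q, r}" "p \<noteq> q" "q \<noteq> r" "p \<noteq> r"
    using L by (auto simp: card_3_iff)
  then have "3 * (2 * m + 1) \<le> 2 * sum g L"
    using pair[of p q] pair[of q r] pair[of p r] by simp
  then have "3 * m + 2 \<le> sum g L"
    by arith
  then have "6 * m + 4 \<le> sum g (L - {c}) + sum g (L - {c'}) + sum g (L - {c''})"
    using sum.Int_Diff[OF fin, of g "{c}"] sum.Int_Diff[OF fin, of g "{c'}"]
      sum.Int_Diff[OF fin, of g "{c''}"] sum_Int_singletons_le[OF fin distinct, of g]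
    by linarith
  then show "3 * (2 * m + 1) + 1 \<le> sum g (L - {c}) + sum g (L - {c'}) + sum g (L - {c''})"
    by simp
qed

lemma sum_Diff_singleton_bounds_of_triples:
  fixes g :: "'a \<Rightarrow> nat"
  assumes L: "card L = 3" and single: "\<And>c. m \<le> g c"
    and triple: "\<And>c c' c''. c \<noteq> c' \<Longrightarrow> c' \<noteq> c'' \<Longrightarrow> c \<noteq> c'' \<Longrightarrow>
      3 * m + 1 \<le> g c + g c' + g c''"
  shows "2 * m \<le> sum g (L - {c})"
    and "c \<noteq> c' \<Longrightarrow> 2 * (2 * m) + 1 \<le> sum g (L - {c}) + sum g (L - {c'})"
proof -
  show "2 * m \<le> sum g (L - {c})"
    using sum_Diff_singleton_ge_pair[OF L, of g c] single by (metis add_mono mult_2 order_trans)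
  assume "c \<noteq> c'"
  have fin: "finite L"
    using L by (auto intro: card_ge_0_finite)
  obtain p q r where L': "L = {p, q, r}" "p \<noteq> q" "q \<noteq> r" "p \<noteq> r"
    using L by (auto simp: card_3_iff)
  then have "3 * m + 1 \<le> sum g L"
    using triple[of p q r] by simp
  obtain c'' where c'': "c'' \<in> L" "c'' \<noteq> c" "c'' \<noteq> c'"
    using L' by auto
  then have "m \<le> sum g (L \<inter> {c''})"
    using single by (simp add: Int_insert_right)
  moreover have "sum g (L \<inter> {c}) + sum g (L \<inter> {c'}) + sum g (L \<inter> {c''}) \<le> sum g L"
    using fin \<open>c \<noteq> c'\<close> c'' by (intro sum_Int_singletons_le) auto
  ultimately show "2 * (2 * m) + 1 \<le> sum g (L - {c}) + sum g (L - {c'})"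
    using sum.Int_Diff[OF fin, of g "{c}"] sum.Int_Diff[OF fin, of g "{c'}"] \<open>3 * m + 1 \<le> sum g L\<close>
    by linarith
qed

lemma card_path_colourings_lower_bounds:
  fixes Ls :: "nat set list" and d :: nat
  assumes "\<forall>L\<in>set Ls. card L = 3"
  defines "N \<equiv> \<lambda>c. card (path_colourings c Ls d)" and "m \<equiv> min_path_count (length Ls)"
  shows "(\<forall>c. m \<le> N c)
    \<and> (even (length Ls) \<longrightarrow> (\<forall>c c'. c \<noteq> c' \<longrightarrow> 2 * m + 1 \<le> N c + N c'))
    \<and> (odd (length Ls) \<longrightarrow> (\<forall>c c' c''. c \<noteq> c' \<and> c' \<noteq> c'' \<and> c \<noteq> c'' \<longrightarrow>
          3 * m + 1 \<le> N c + N c' + N c''))"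
  using assms(1) unfolding N_def m_def
proof (induction Ls)
  case Nil
  then show ?case by (auto simp: path_colourings_Nil)
next
  case (Cons L Ls)
  define g where "g = (\<lambda>z. card (path_colourings z Ls d))"
  define m where "m = min_path_count (length Ls)"
  have L: "card L = 3"
    using Cons.prems by simp
  have IH: "(\<forall>c. m \<le> g c)
    \<and> (even (length Ls) \<longrightarrow> (\<forall>c c'. c \<noteq> c' \<longrightarrow> 2 * m + 1 \<le> g c + g c'))
    \<and> (odd (length Ls) \<longrightarrow> (\<forall>c c' c''. c \<noteq> c' \<and> c' \<noteq> c'' \<and> c \<noteq> c'' \<longrightarrow>
          3 * m + 1 \<le> g c + g c' + g c''))"
    using Cons unfolding g_def m_def by simp
  have N: "card (path_colourings c (L # Ls) d) = sum g (L - {c})" for c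
    using Cons.prems unfolding g_def
    by (intro card_path_colourings_Cons) (auto intro: card_ge_0_finite)
  show ?case
  proof (cases "even (length Ls)")
    case True
    then have "min_path_count (length (L # Ls)) = 2 * m + 1" "odd (length (L # Ls))"
      by (simp_all add: m_def)
    then show ?thesis
      unfolding N using sum_Diff_singleton_bounds_of_pairs[OF L, of m g] IH True by auto
  next
    case False
    then have "min_path_count (length (L # Ls)) = 2 * m" "even (length (L # Ls))"
      by (simp_all add: m_def)
    then show ?thesis
      unfolding N using sum_Diff_singleton_bounds_of_triples[OF L, of m g] IH False by auto
  qed
qed

lemma theta_pv_Suc_neq:
  "j < theta_len l1 l2 l3 i \<Longrightarrow> theta_pv l1 l2 l3 i j \<noteq> theta_pv l1 l2 l3 i (Suc j)"
  by (auto simp: theta_pv_def)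

lemma proper_theta_E_iff:
  "proper (theta_E l1 l2 l3) f \<longleftrightarrow>
    (\<forall>i\<in>{1,2,3}. \<forall>j<theta_len l1 l2 l3 i.
       f (theta_pv l1 l2 l3 i j) \<noteq> f (theta_pv l1 l2 l3 i (Suc j)))"
  unfolding proper_def theta_E_def by (auto dest: theta_pv_Suc_neq)

lemma mem_theta_V_2n2:
  "v \<in> theta_V 2 n 2 \<longleftrightarrow> v = End0 \<or> v = End1 \<or> v = Inner 1 1 \<or> v = Inner 3 1 \<or>
     (\<exists>j. v = Inner 2 j \<and> 1 \<le> j \<and> j < n)"
  unfolding theta_V_def theta_len_def by force

lemma successively_map_upt_Suc:
  "successively (\<noteq>) (map h [0..<Suc n]) \<longleftrightarrow> (\<forall>j<n. h j \<noteq> h (Suc j))"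
  unfolding successively_conv_nth by (simp del: upt_Suc add: nth_map)

lemma proper_theta_2n2_iff:
  assumes "0 < n"
  shows "proper (theta_E 2 n 2) f \<longleftrightarrow>
    f End0 \<noteq> f (Inner 1 1) \<and> f (Inner 1 1) \<noteq> f End1 \<and>
    f End0 \<noteq> f (Inner 3 1) \<and> f (Inner 3 1) \<noteq> f End1 \<and>
    successively (\<noteq>) (f End0 # map (\<lambda>j. f (Inner 2 j)) [1..<n] @ [f End1])"
proof -
  have "map (\<lambda>j. f (theta_pv 2 n 2 2 j)) [0..<Suc n]
      = f End0 # map (\<lambda>j. f (Inner 2 j)) [1..<n] @ [f End1]"
    using assms by (simp add: upt_conv_Cons theta_pv_def theta_len_def)
  then have path: "(\<forall>j<n. f (theta_pv 2 n 2 2 j) \<noteq> f (theta_pv 2 n 2 2 (Suc j))) \<longleftrightarrow>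
      successively (\<noteq>) (f End0 # map (\<lambda>j. f (Inner 2 j)) [1..<n] @ [f End1])"
    by (metis successively_map_upt_Suc)
  have two: "(\<forall>j<(2::nat). P j) \<longleftrightarrow> P 0 \<and> P 1" for P
    by (auto simp: less_2_cases_iff)
  show ?thesis
    unfolding proper_theta_E_iff path[symmetric]
    by (simp add: two theta_len_def theta_pv_def) blast
qed

type_synonym theta_code = "nat \<times> nat \<times> nat \<times> nat \<times> nat list"

definition theta_encode :: "nat \<Rightarrow> (theta_vertex \<Rightarrow> nat) \<Rightarrow> theta_code" where
  "theta_encode n f =
     (f End0, f End1, f (Inner 1 1), f (Inner 3 1), map (\<lambda>j. f (Inner 2 j)) [1..<n])"

(* The value undefined off the vertex set makes decoded colourings extensional, as Pi_E requires. *)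
fun theta_decode :: "nat \<Rightarrow> theta_code \<Rightarrow> theta_vertex \<Rightarrow> nat" where
  "theta_decode n (c, d, x, y, xs) End0 = c"
| "theta_decode n (c, d, x, y, xs) End1 = d"
| "theta_decode n (c, d, x, y, xs) (Inner i j) =
     (if i = 1 \<and> j = 1 then x else if i = 3 \<and> j = 1 then y
      else if i = 2 \<and> 1 \<le> j \<and> j < n then xs ! (j - 1) else undefined)"

definition theta_codes :: "nat \<Rightarrow> (theta_vertex \<Rightarrow> nat set) \<Rightarrow> theta_code set" where
  "theta_codes n L =
     (SIGMA c:L End0. SIGMA d:L End1. (L (Inner 1 1) - {c, d}) \<times> (L (Inner 3 1) - {c, d})
        \<times> path_colourings c (map (\<lambda>j. L (Inner 2 j)) [1..<n]) d)"

lemma theta_decode_encode: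
  assumes "f \<in> extensional (theta_V 2 n 2)"
  shows "theta_decode n (theta_encode n f) = f"
proof
  fix v
  show "theta_decode n (theta_encode n f) v = f v"
  proof (cases "v \<in> theta_V 2 n 2")
    case True
    then consider "v = End0" | "v = End1" | "v = Inner 1 1" | "v = Inner 3 1"
      | j where "v = Inner 2 j" "1 \<le> j" "j < n"
      unfolding mem_theta_V_2n2 by blast
    then show ?thesis
      by cases (auto simp: theta_encode_def)
  next
    case False
    then show ?thesis
      using assms by (cases v) (auto simp: mem_theta_V_2n2 theta_encode_def extensional_def)
  qed
qed

lemma theta_encode_decode:
  assumes "length xs = n - 1"
  shows "theta_encode n (theta_decode n (c, d, x, y, xs)) = (c, d, x, y, xs)"
proof -
  have "map (\<lambda>j. theta_decode n (c, d, x, y, xs) (Inner 2 j)) [1..<n] = xs"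
    by (rule nth_equalityI) (use assms in auto)
  then show ?thesis
    by (simp add: theta_encode_def)
qed

lemma theta_encode_mem_codes:
  assumes "0 < n" "f \<in> Pi\<^sub>E (theta_V 2 n 2) L" "proper (theta_E 2 n 2) f"
  shows "theta_encode n f \<in> theta_codes n L"
proof -
  have col: "f v \<in> L v" if "v \<in> theta_V 2 n 2" for v
    using assms(2) that by auto
  have "list_all2 (\<in>) (map (\<lambda>j. f (Inner 2 j)) [1..<n]) (map (\<lambda>j. L (Inner 2 j)) [1..<n])"
    by (simp add: list_all2_map1 list_all2_map2 list_all2_same col mem_theta_V_2n2)
  then show ?thesis
    using assms(3) col unfolding proper_theta_2n2_iff[OF assms(1)]
    by (auto simp: theta_encode_def theta_codes_def path_colourings_def mem_theta_V_2n2)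
qed

lemma theta_decode_mem_colourings:
  assumes "0 < n" "t \<in> theta_codes n L"
  shows "theta_decode n t \<in> Pi\<^sub>E (theta_V 2 n 2) L" "proper (theta_E 2 n 2) (theta_decode n t)"
proof -
  obtain c d x y xs where t: "t = (c, d, x, y, xs)" and cd: "c \<in> L End0" "d \<in> L End1"
    and xy: "x \<in> L (Inner 1 1) - {c, d}" "y \<in> L (Inner 3 1) - {c, d}"
    and xs: "xs \<in> path_colourings c (map (\<lambda>j. L (Inner 2 j)) [1..<n]) d"
    using assms(2) unfolding theta_codes_def by blast
  have xs_col: "list_all2 (\<in>) xs (map (\<lambda>j. L (Inner 2 j)) [1..<n])"
    and xs_path: "successively (\<noteq>) (c # xs @ [d])"
    using xs by (auto simp: path_colourings_def)
  have len: "length xs = n - 1"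
    using length_path_colourings[OF xs] by simp
  have "xs ! (j - 1) \<in> L (Inner 2 j)" if "1 \<le> j" "j < n" for j
  proof -
    have "j - 1 < length xs" "Suc (j - 1) = j"
      using that len by auto
    then show ?thesis
      using list_all2_nthD2[OF xs_col, of "j - 1"] len by simp
  qed
  then have "theta_decode n t v \<in> L v" if "v \<in> theta_V 2 n 2" for v
    using that cd xy unfolding t mem_theta_V_2n2 by (elim disjE exE) auto
  moreover have "theta_decode n t \<in> extensional (theta_V 2 n 2)"
    unfolding extensional_def
  proof (intro CollectI allI impI)
    fix v
    assume "v \<notin> theta_V 2 n 2"
    then show "theta_decode n t v = undefined"
      unfolding t by (cases v) (auto simp: mem_theta_V_2n2)
  qed
  ultimately show "theta_decode n t \<in> Pi\<^sub>E (theta_V 2 n 2) L"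
    by (simp add: PiE_iff)
  have "map (\<lambda>j. theta_decode n t (Inner 2 j)) [1..<n] = xs"
    using theta_encode_decode[OF len] unfolding t by (simp add: theta_encode_def)
  then show "proper (theta_E 2 n 2) (theta_decode n t)"
    using xy xs_path unfolding proper_theta_2n2_iff[OF assms(1)] t
    by simp
qed

lemma bij_betw_theta_encode:
  assumes "0 < n"
  shows "bij_betw (theta_encode n) {f \<in> Pi\<^sub>E (theta_V 2 n 2) L. proper (theta_E 2 n 2) f}
    (theta_codes n L)"
proof (rule bij_betw_byWitness[where f' = "theta_decode n"])
  show "\<forall>t\<in>theta_codes n L. theta_encode n (theta_decode n t) = t"
    by (auto simp: theta_codes_def theta_encode_decode dest!: length_path_colourings)
qed (use assms theta_decode_encode theta_encode_mem_codes theta_decode_mem_colourings in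
      \<open>auto simp: PiE_iff\<close>)

lemma P_list_theta_2n2:
  assumes "0 < n" "\<forall>v\<in>theta_V 2 n 2. finite (L v)"
  shows "P_list (theta_V 2 n 2) (theta_E 2 n 2) L =
    (\<Sum>c\<in>L End0. \<Sum>d\<in>L End1. card (L (Inner 1 1) - {c, d}) * card (L (Inner 3 1) - {c, d})
       * card (path_colourings c (map (\<lambda>j. L (Inner 2 j)) [1..<n]) d))"
proof -
  have fin: "finite (L End0)" "finite (L End1)" "finite (L (Inner 1 1))" "finite (L (Inner 3 1))"
    "\<forall>A\<in>set (map (\<lambda>j. L (Inner 2 j)) [1..<n]). finite A"
    using assms(2) by (auto simp: mem_theta_V_2n2)
  have "P_list (theta_V 2 n 2) (theta_E 2 n 2) L = card (theta_codes n L)"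
    unfolding P_list_def by (rule bij_betw_same_card[OF bij_betw_theta_encode[OF assms(1)]])
  also have "\<dots> = (\<Sum>c\<in>L End0. \<Sum>d\<in>L End1. card (L (Inner 1 1) - {c, d}) * card (L (Inner 3 1) - {c, d})
       * card (path_colourings c (map (\<lambda>j. L (Inner 2 j)) [1..<n]) d))"
    unfolding theta_codes_def using fin
    by (simp add: card_cartesian_product finite_path_colourings mult.assoc)
  finally show ?thesis .
qed

lemma card_Diff_pair_ge_1: "card A = 3 \<Longrightarrow> 1 \<le> card (A - {c, d})"
  using diff_card_le_card_Diff[of "{c, d}" A] card_insert_le_m1[of 2 "{d}" c] by simp

lemma card_Diff_singleton_ge_2: "card A = 3 \<Longrightarrow> 2 \<le> card (A - {c})"
  by (simp add: card_Diff_singleton_if)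

lemma sum_sum_card_Diff_pair:
  assumes "finite A" "finite B" "finite C"
  shows "(\<Sum>c\<in>A. \<Sum>d\<in>B. card (C - {c, d})) = (\<Sum>x\<in>C. card (A - {x}) * card (B - {x}))"
proof -
  have "(\<Sum>c\<in>A. \<Sum>d\<in>B. card (C - {c, d})) = card (SIGMA c:A. SIGMA d:B. C - {c, d})"
    using assms by simp
  also have "\<dots> = card ((\<lambda>(c, d, x). (x, c, d)) ` (SIGMA c:A. SIGMA d:B. C - {c, d}))"
    by (rule card_image[symmetric]) (auto simp: inj_on_def)
  also have "(\<lambda>(c, d, x). (x, c, d)) ` (SIGMA c:A. SIGMA d:B. C - {c, d}) = (SIGMA x:C. (A - {x}) \<times> (B - {x}))"
    by (auto simp: image_iff)
  also have "card \<dots> = (\<Sum>x\<in>C. card (A - {x}) * card (B - {x}))"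
    using assms by (simp add: card_cartesian_product)
  finally show ?thesis .
qed

lemma sum_sum_card_Diff_pair_ge:
  assumes "card A = 3" "card B = 3" "card C = 3"
  shows "18 \<le> (\<Sum>c\<in>A. \<Sum>d\<in>B. card (C - {c, d})) + 2 * card (A \<inter> B)"
proof -
  have fin: "finite A" "finite B" "finite C"
    using assms by (auto intro: card_ge_0_finite)
  have "18 = (\<Sum>x\<in>C. 6::nat)"
    using assms by simp
  also have "\<dots> \<le> (\<Sum>x\<in>C. card (A - {x}) * card (B - {x}) + 2 * (if x \<in> A \<inter> B then 1 else 0))"
    using assms by (intro sum_mono) (auto simp: card_Diff_singleton_if)
  also have "\<dots> = (\<Sum>c\<in>A. \<Sum>d\<in>B. card (C - {c, d})) + 2 * card (C \<inter> (A \<inter> B))"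
    using fin by (simp add: sum.distrib sum_distrib_left[symmetric] sum_sum_card_Diff_pair
        sum.If_cases) (simp add: Int_def)
  also have "\<dots> \<le> (\<Sum>c\<in>A. \<Sum>d\<in>B. card (C - {c, d})) + 2 * card (A \<inter> B)"
    using fin by (intro add_left_mono mult_left_mono card_mono) auto
  finally show ?thesis .
qed

lemma add_le_mult_add_1: "1 \<le> a \<Longrightarrow> 1 \<le> b \<Longrightarrow> a + b \<le> a * b + (1::nat)"
  by (cases a; cases b) auto

lemma add_le_mult: "2 \<le> a \<Longrightarrow> 2 \<le> b \<Longrightarrow> a + b \<le> a * (b::nat)"
  using add_le_mult_add_1[of "a - 1" "b - 1"] by (cases a; cases b) auto

lemma four_cycle_colourings_ge:
  assumes "card A = 3" "card B = 3" "card C = 3" "card D = 3"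
  shows "18 \<le> (\<Sum>c\<in>A. \<Sum>d\<in>B. card (C - {c, d}) * card (D - {c, d}))"
proof -
  have fin: "finite A" "finite B"
    using assms by (auto intro: card_ge_0_finite)
  let ?a = "\<lambda>c d. card (C - {c, d})" and ?b = "\<lambda>c d. card (D - {c, d})"
  have "?a c d + ?b c d + (if c = d then 1 else 0) \<le> ?a c d * ?b c d + 1" for c d
  proof (cases "c = d")
    case True
    have "card (C - {c}) + card (D - {c}) \<le> card (C - {c}) * card (D - {c})"
      by (intro add_le_mult card_Diff_singleton_ge_2 assms)
    then show ?thesis
      using True by simp
  next
    case False
    have "?a c d + ?b c d \<le> ?a c d * ?b c d + 1"
      by (intro add_le_mult_add_1 card_Diff_pair_ge_1 assms)
    then show ?thesis
      using False by simp
  qed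
  then have "(\<Sum>c\<in>A. \<Sum>d\<in>B. ?a c d + ?b c d + (if c = d then 1 else 0))
      \<le> (\<Sum>c\<in>A. \<Sum>d\<in>B. ?a c d * ?b c d + 1)"
    by (intro sum_mono)
  also have "\<dots> = (\<Sum>c\<in>A. \<Sum>d\<in>B. ?a c d * ?b c d) + 9"
    using assms by (simp only: sum.distrib) simp
  finally have "(\<Sum>c\<in>A. \<Sum>d\<in>B. ?a c d) + (\<Sum>c\<in>A. \<Sum>d\<in>B. ?b c d)
      + (\<Sum>c\<in>A. \<Sum>d\<in>B. if c = d then 1 else 0) \<le> (\<Sum>c\<in>A. \<Sum>d\<in>B. ?a c d * ?b c d) + 9"
    by (simp only: sum.distrib)
  moreover have "(\<Sum>c\<in>A. \<Sum>d\<in>B. (if c = d then 1 else 0)::nat) = card (A \<inter> B)"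
    using fin by (simp add: sum.If_cases Int_def)
  moreover have "card (A \<inter> B) \<le> 3"
    using assms card_mono[of A "A \<inter> B"] fin by auto
  ultimately show ?thesis
    using sum_sum_card_Diff_pair_ge[of A B C] sum_sum_card_Diff_pair_ge[of A B D] assms
    by linarith
qed

lemma mult_add_le_mult_add:
  fixes k m n :: nat
  assumes "1 \<le> k" "m \<le> n"
  shows "k * m + n \<le> k * n + m"
proof -
  obtain k' e where "k = Suc k'" "n = m + e"
    using assms by (metis Suc_le_D One_nat_def le_Suc_ex)
  then show ?thesis
    by (simp add: algebra_simps)
qed

lemma sum_mult_ge_of_pairwise_excess:
  fixes K N :: "'a \<Rightarrow> nat"
  assumes "card A = 3" "\<forall>c\<in>A. 1 \<le> K c" "\<forall>c\<in>A. m \<le> N c"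
    "\<forall>c\<in>A. \<forall>c'\<in>A. c \<noteq> c' \<longrightarrow> 2 * m + 1 \<le> N c + N c'"
  shows "m * sum K A + 2 \<le> (\<Sum>c\<in>A. K c * N c)"
proof -
  obtain p q r where A: "A = {p, q, r}" "p \<noteq> q" "q \<noteq> r" "p \<noteq> r"
    using assms(1) by (auto simp: card_3_iff)
  have "2 * m + 1 \<le> N p + N q" "2 * m + 1 \<le> N q + N r" "2 * m + 1 \<le> N p + N r"
    using assms(4) A by auto
  moreover have "K p * m + N p \<le> K p * N p + m" "K q * m + N q \<le> K q * N q + m"
    "K r * m + N r \<le> K r * N r + m"
    using assms(2,3) A(1) by (simp_all add: mult_add_le_mult_add)
  moreover have "m * (K p + K q + K r) = K p * m + K q * m + K r * m"
    by (simp add: algebra_simps)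
  ultimately have "m * (K p + K q + K r) + 2 \<le> K p * N p + K q * N q + K r * N r"
    by linarith
  then show ?thesis
    using A by (simp add: add.assoc)
qed

lemma theta_colouring_sum_ge:
  assumes "card A = 3" "card B = 3" "card C = 3" "card D = 3"
    and "\<forall>L\<in>set Ls. card L = 3" "even (length Ls)"
  shows "18 * min_path_count (length Ls) + 6 \<le>
    (\<Sum>c\<in>A. \<Sum>d\<in>B. card (C - {c, d}) * card (D - {c, d}) * card (path_colourings c Ls d))"
proof -
  define m where "m = min_path_count (length Ls)"
  define K where "K = (\<lambda>c d. card (C - {c, d}) * card (D - {c, d}))"
  have path_bounds: "\<forall>c. m \<le> card (path_colourings c Ls d)"
    "\<forall>c c'. c \<noteq> c' \<longrightarrow> 2 * m + 1 \<le> card (path_colourings c Ls d) + card (path_colourings c' Ls d)"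
    for d
    using card_path_colourings_lower_bounds[OF assms(5)] assms(6) unfolding m_def by auto
  have "1 \<le> K c d" for c d
    using mult_le_mono[OF card_Diff_pair_ge_1[OF assms(3)] card_Diff_pair_ge_1[OF assms(4)]]
    unfolding K_def by simp
  then have per_d: "m * (\<Sum>c\<in>A. K c d) + 2 \<le> (\<Sum>c\<in>A. K c d * card (path_colourings c Ls d))" for d
    using path_bounds by (intro sum_mult_ge_of_pairwise_excess assms(1)) auto
  have "18 \<le> (\<Sum>d\<in>B. \<Sum>c\<in>A. K c d)"
    using four_cycle_colourings_ge[OF assms(1-4)] unfolding K_def by (simp add: sum.swap[of _ A])
  then have "18 * m + 6 \<le> m * (\<Sum>d\<in>B. \<Sum>c\<in>A. K c d) + (\<Sum>d\<in>B. 2)"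
    using assms(2) by (simp add: mult.commute)
  also have "\<dots> = (\<Sum>d\<in>B. m * (\<Sum>c\<in>A. K c d) + 2)"
    by (simp only: sum.distrib sum_distrib_left)
  also have "\<dots> \<le> (\<Sum>d\<in>B. \<Sum>c\<in>A. K c d * card (path_colourings c Ls d))"
    by (intro sum_mono per_d)
  finally show ?thesis
    unfolding m_def K_def by (subst sum.swap) simp
qed

lemma card_path_colourings_replicate:
  assumes "c \<in> {1, 2, 3}" "d \<in> {1, 2, 3}"
  shows "card (path_colourings c (replicate k {1, 2, 3}) d) =
    min_path_count k + (if even k \<longleftrightarrow> c \<noteq> d then 1 else 0)"
  using assms(1)
proof (induction k arbitrary: c)
  case 0
  then show ?case by (simp add: path_colourings_Nil)
next
  case (Suc k)
  have "card (path_colourings c (replicate (Suc k) {1, 2, 3}) d)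
      = (\<Sum>z\<in>{1, 2, 3} - {c}. card (path_colourings z (replicate k {1, 2, 3}) d))"
    by (simp add: card_path_colourings_Cons)
  also have "\<dots> = (\<Sum>z\<in>{1, 2, 3} - {c}. min_path_count k + (if even k \<longleftrightarrow> z \<noteq> d then 1 else 0))"
    by (intro sum.cong refl Suc.IH) blast
  finally show ?case
    using Suc.prems assms(2) by (auto simp: insert_Diff_if)
qed

lemma P_chrom3_theta_2n2:
  assumes "odd n"
  shows "P_chrom3 (theta_V 2 n 2) (theta_E 2 n 2) = 18 * min_path_count (n - 1) + 6"
proof -
  have path_count: "card (path_colourings c (replicate (n - 1) {1, 2, 3}) d)
      = min_path_count (n - 1) + (if c \<noteq> d then 1 else 0)"
    if "c \<in> {1, 2, 3}" "d \<in> {1, 2, 3}" for c d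
    using card_path_colourings_replicate[OF that, of "n - 1"] assms by simp
  have "P_chrom3 (theta_V 2 n 2) (theta_E 2 n 2) =
      (\<Sum>c\<in>{1, 2, 3}. \<Sum>d\<in>{1, 2, 3}. card ({1, 2, 3} - {c, d}) * card ({1, 2, 3} - {c, d})
         * card (path_colourings c (map (\<lambda>j. {1, 2, 3}) [1..<n]) d))"
    unfolding P_chrom3_def using assms by (intro P_list_theta_2n2) (simp_all add: odd_pos)
  also have "map (\<lambda>j. {1, 2, 3}) [1..<n] = replicate (n - 1) {1, 2, 3::nat}"
    by (simp add: map_replicate_const)
  also have "(\<Sum>c\<in>{1, 2, 3}. \<Sum>d\<in>{1, 2, 3}. card ({1, 2, 3} - {c, d}) * card ({1, 2, 3} - {c, d})
         * card (path_colourings c (replicate (n - 1) {1, 2, 3}) d))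
      = (\<Sum>c\<in>{1, 2, 3}. \<Sum>d\<in>{1, 2, 3::nat}. card ({1, 2, 3} - {c, d}) * card ({1, 2, 3} - {c, d})
         * (min_path_count (n - 1) + (if c \<noteq> d then 1 else 0)))"
    by (intro sum.cong refl) (simp only: path_count)
  also have "\<dots> = 18 * min_path_count (n - 1) + 6"
    by (simp add: insert_Diff_if)
  finally show ?thesis .
qed

lemma P_list_theta_2n2_ge:
  assumes "odd n" "three_assignment (theta_V 2 n 2) L"
  shows "18 * min_path_count (n - 1) + 6 \<le> P_list (theta_V 2 n 2) (theta_E 2 n 2) L"
proof -
  have card_L: "card (L v) = 3" if "v \<in> theta_V 2 n 2" for v
    using assms(2) that by (simp add: three_assignment_def)
  have "18 * min_path_count (n - 1) + 6 \<le>
      (\<Sum>c\<in>L End0. \<Sum>d\<in>L End1. card (L (Inner 1 1) - {c, d}) * card (L (Inner 3 1) - {c, d})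
         * card (path_colourings c (map (\<lambda>j. L (Inner 2 j)) [1..<n]) d))"
    using theta_colouring_sum_ge[of "L End0" "L End1" "L (Inner 1 1)" "L (Inner 3 1)"
        "map (\<lambda>j. L (Inner 2 j)) [1..<n]"] card_L assms(1)
    by (simp add: mem_theta_V_2n2)
  also have "\<dots> = P_list (theta_V 2 n 2) (theta_E 2 n 2) L"
    using assms(1) card_L by (intro P_list_theta_2n2[symmetric]) (auto intro: card_ge_0_finite odd_pos)
  finally show ?thesis .
qed

lemma P_list3_eq_P_chrom3:
  assumes "\<And>L. three_assignment V L \<Longrightarrow> P_chrom3 V E \<le> P_list V E L"
  shows "P_list3 V E = P_chrom3 V E"
  unfolding P_list3_def
proof (rule cInf_eq_minimum)
  show "P_chrom3 V E \<in> {P_list V E L |L. three_assignment V L}"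
    unfolding P_chrom3_def three_assignment_def by auto
qed (use assms in auto)

theorem lemma2p9:
  fixes l2 :: nat
  assumes "odd l2" and "3 \<le> l2"
  shows "P_list3 (theta_V 2 l2 2) (theta_E 2 l2 2) = P_chrom3 (theta_V 2 l2 2) (theta_E 2 l2 2)"
  using P_chrom3_theta_2n2[OF assms(1)] P_list_theta_2n2_ge[OF assms(1)]
  by (intro P_list3_eq_P_chrom3) simp

end
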